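(* Let $T$ be a reduced linear trellis of length $n$. (1) If $S^1,\dots,S^r\le\mathbb{S}(T)$ are subspaces such that $\mathbb{S}_{\mathfrak{s}}(T)=\bigoplus_{i=1}^r\bigl(S^i\cap\mathbb{S}_{\mathfrak{s}}(T)\bigr)$ for every span $\mathfrak{s}$, then $S^i=\mathbb{S}(T(S^i))$ for every $i$, and there is a linear isomorphism $f:T\to\bigotimes_{i=1}^rT(S^i)$ mapping each subtrellis $T(S^i)$ onto the natural copy $0\otimes\cdots\otimes0\otimes T(S^i)\otimes0\otimes\cdots\otimes0$. (2) Conversely, if $T_1,\dots,T_r$ are linear trellises of length $n$ with $\sum_{i=1}^r\dim\mathbb{S}_{(a,0)}(T_i)\le1$ for all $a\in\mathbb{Z}_n$, and $f:T\to\bigotimes_{i=1}^rT_i$ is a linear isomorphism, then for every span $\mathfrak{s}$ $$\mathbb{S}_{\mathfrak{s}}(T)=\bigoplus_{i=1}^r\mathbb{S}_{\mathfrak{s}}\bigl(f^{-1}(0\otimes\cdots\otimes0\otimes T_i\otimes0\otimes\cdots\otimes0)\bigr).$$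
   Context: Let $\mathbb{F}$ be a finite field and $n\ge1$; indices are taken in $\mathbb{Z}_n$. A trellis $T$ of length $n$ over $\mathbb{F}$ consists of pairwise disjoint finite vertex sets $V_i(T)$, $i\in\mathbb{Z}_n$, and edge sets $E_i(T)\subseteq V_i(T)\times\mathbb{F}\times V_{i+1}(T)$; $(v,\alpha,w)\in E_i(T)$ is an edge from $v$ to $w$ with label $\alpha$. Trellises are trim (each vertex has an outgoing and an incoming edge). $T$ is linear if each $V_i(T)$ is an $\mathbb{F}$-vector space and each $E_i(T)$ a subspace. A cycle is a closed path of length $n$ starting in $V_0(T)$, identified with $(\mathbf{v},\boldsymbol{\alpha})\in\prod_iV_i(T)\times\mathbb{F}^n$; $\mathbb{S}(T)$ is the (linear) space of cycles. $T$ is reduced if every edge lies on a cycle. A linear subtrellis $T''\le T$ is a trim subgraph with $V_i(T'')\le V_i(T)$, $E_i(T'')\le E_i(T)$ subspaces; its cycles are cycles of $T$, so $\mathbb{S}(T'')\le\mathbb{S}(T)$. For $S\le\mathbb{S}(T)$, $T(S)$ is the subtrellis of $T$ consisting of all vertices and edges lying on some cycle in $S$. A linear isomorphism $f:T\to T'$ is a family of linear bijections $f_i:V_i(T)\to V_i(T')$ with $(v,\alpha,w)\in E_i(T)\iff(f_i(v),\alpha,f_{i+1}(w))\in E_i(T')$. The product $T\otimes T'$ has $V_i=V_i(T)\times V_i(T')$ and $E_i=\{((v,v'),\alpha+\alpha',(w,w')):(v,\alpha,w)\in E_i(T),(v',\alpha',w')\in E_i(T')\}$; products of several trellises are defined iteratively,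 and $0\otimes\cdots\otimes T_i\otimes\cdots\otimes0$ denotes the linear subtrellis of $\bigotimes_kT_k$ that is the image of $T_i$ under $v\mapsto(0,\dots,0,v,0,\dots,0)$. Spans: for $a\in\mathbb{Z}_n$, $0\le l\le n-1$, $[a,a+l]=\{a,\dots,a+l\}$, $(a,a+l]=[a,a+l]\setminus\{a\}$; $(a,l)$ is a span; also degenerate spans $\emptyset$ and $\mathbb{Z}_n$. A nondegenerate $(a,l)$ is a span of a cycle $(\mathbf{v},\boldsymbol{\alpha})$ if $\{i:v_i\ne0\}\subseteq(a,a+l]$ and $\{i:\alpha_i\ne0\}\subseteq[a,a+l]$; $\emptyset$ is a span only of the zero cycle and $\mathbb{Z}_n$ of every cycle. $\mathbb{S}_{\mathfrak{s}}(T)$ is the subspace of cycles having span $\mathfrak{s}$ (for a subtrellis, its cycles having span $\mathfrak{s}$). *)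

theory Defs
  imports Main HOL.Vector_Spaces "HOL-Library.Function_Algebras" "HOL-Library.Product_Plus" "HOL-Library.Nat_Bijection"
begin

text \<open>Vertices of all trellises are
represented uniformly as coordinate vectors of type nat => 'a (pointwise addition from
Function_Algebras); every finite-dimensional vector space over 'a embeds linearly into this
space, so this loses no generality up to linear isomorphism.  Indices of Z_n are the
naturals 0..n-1; successor is (i+1) mod n.  Outside 0..n-1 all components are empty / zero.\<close>

type_synonym 'a vert = "nat \<Rightarrow> 'a"
type_synonym 'a edge = "'a vert \<times> 'a \<times> 'a vert"
type_synonym 'a cyc = "(nat \<Rightarrow> 'a vert) \<times> (nat \<Rightarrow> 'a)"

record 'a trellis =
  Vt :: "nat \<Rightarrow> 'a vert set"
  Et :: "nat \<Rightarrow> 'a edge set"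

definition nxt :: "nat \<Rightarrow> nat \<Rightarrow> nat" where
  "nxt n i = (Suc i) mod n"

definition prv :: "nat \<Rightarrow> nat \<Rightarrow> nat" where
  "prv n i = (i + n - 1) mod n"

definition vsc :: "'a::field \<Rightarrow> 'a vert \<Rightarrow> 'a vert" where
  "vsc c v = (\<lambda>k. c * v k)"

definition esc :: "'a::field \<Rightarrow> 'a edge \<Rightarrow> 'a edge" where
  "esc c e = (case e of (v, \<alpha>, w) \<Rightarrow> (vsc c v, c * \<alpha>, vsc c w))"

definition csc :: "'a::field \<Rightarrow> 'a cyc \<Rightarrow> 'a cyc" where
  "csc c x = (case x of (v, \<alpha>) \<Rightarrow> (\<lambda>i. vsc c (v i), \<lambda>i. c * \<alpha> i))"

definition is_trellis :: "nat \<Rightarrow> 'a trellis \<Rightarrow> bool" where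
  "is_trellis n T \<longleftrightarrow>
     (\<forall>i<n. finite (Vt T i) \<and> Et T i \<subseteq> Vt T i \<times> UNIV \<times> Vt T (nxt n i)) \<and>
     (\<forall>i<n. \<forall>v\<in>Vt T i. (\<exists>\<alpha> w. (v, \<alpha>, w) \<in> Et T i) \<and> (\<exists>u \<alpha>. (u, \<alpha>, v) \<in> Et T (prv n i))) \<and>
     (\<forall>i\<ge>n. Vt T i = {} \<and> Et T i = {})"

definition linear_trellis :: "nat \<Rightarrow> ('a::field) trellis \<Rightarrow> bool" where
  "linear_trellis n T \<longleftrightarrow> is_trellis n T \<and>
     (\<forall>i<n. module.subspace vsc (Vt T i) \<and> module.subspace esc (Et T i))"

definition cycles :: "nat \<Rightarrow> ('a::zero) trellis \<Rightarrow> 'a cyc set" where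
  "cycles n T = {(v, \<alpha>). (\<forall>i<n. (v i, \<alpha> i, v (nxt n i)) \<in> Et T i) \<and>
                          (\<forall>i\<ge>n. v i = 0 \<and> \<alpha> i = 0)}"

definition reduced :: "nat \<Rightarrow> ('a::zero) trellis \<Rightarrow> bool" where
  "reduced n T \<longleftrightarrow> (\<forall>i<n. \<forall>e\<in>Et T i. \<exists>(v, \<alpha>)\<in>cycles n T. e = (v i, \<alpha> i, v (nxt n i)))"

text \<open>Spans: degenerate spans and (a,l) with a in Z_n, 0 \<le> l \<le> n-1.\<close>
datatype span = SEmpty | SFull | Sp nat nat

definition valid_span :: "nat \<Rightarrow> span \<Rightarrow> bool" where
  "valid_span n s = (case s of Sp a l \<Rightarrow> a < n \<and> l < n | _ \<Rightarrow> True)"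

definition closed_iv :: "nat \<Rightarrow> nat \<Rightarrow> nat \<Rightarrow> nat set" where
  "closed_iv n a l = {(a + j) mod n | j. j \<le> l}"

definition halfopen_iv :: "nat \<Rightarrow> nat \<Rightarrow> nat \<Rightarrow> nat set" where
  "halfopen_iv n a l = closed_iv n a l - {a}"

definition has_span :: "nat \<Rightarrow> span \<Rightarrow> ('a::zero) cyc \<Rightarrow> bool" where
  "has_span n s x = (case x of (v, \<alpha>) \<Rightarrow>
     (case s of SEmpty \<Rightarrow> x = 0
              | SFull \<Rightarrow> True
              | Sp a l \<Rightarrow> {i. i < n \<and> v i \<noteq> 0} \<subseteq> halfopen_iv n a l \<and>
                          {i. i < n \<and> \<alpha> i \<noteq> 0} \<subseteq> closed_iv n a l))"

definition span_cycles :: "nat \<Rightarrow> span \<Rightarrow> ('a::zero) trellis \<Rightarrow> 'a cyc set" where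
  "span_cycles n s T = {x \<in> cycles n T. has_span n s x}"

definition sub_trellis :: "nat \<Rightarrow> 'a cyc set \<Rightarrow> 'a trellis" where
  "sub_trellis n S = \<lparr> Vt = (\<lambda>i. if i < n then {v i | v \<alpha>. (v, \<alpha>) \<in> S} else {}),
                       Et = (\<lambda>i. if i < n then {(v i, \<alpha> i, v (nxt n i)) | v \<alpha>. (v, \<alpha>) \<in> S}
                                  else {}) \<rparr>"

definition direct_sum :: "('b::comm_monoid_add) set \<Rightarrow> (nat \<Rightarrow> 'b set) \<Rightarrow> nat \<Rightarrow> bool" where
  "direct_sum W U r \<longleftrightarrow>
     W = {(\<Sum>k<r. u k) | u. \<forall>k<r. u k \<in> U k} \<and>
     (\<forall>u u'. (\<forall>k<r. u k \<in> U k \<and> u' k \<in> U k) \<and> (\<Sum>k<r. u k) = (\<Sum>k<r. u' k)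
              \<longrightarrow> (\<forall>k<r. u k = u' k))"

definition linear_on :: "('a::field) vert set \<Rightarrow> ('a vert \<Rightarrow> 'a vert) \<Rightarrow> bool" where
  "linear_on V g \<longleftrightarrow> (\<forall>x\<in>V. \<forall>y\<in>V. g (x + y) = g x + g y) \<and>
                     (\<forall>c. \<forall>x\<in>V. g (vsc c x) = vsc c (g x))"

definition trellis_iso :: "nat \<Rightarrow> ('a::field) trellis \<Rightarrow> 'a trellis \<Rightarrow> (nat \<Rightarrow> 'a vert \<Rightarrow> 'a vert) \<Rightarrow> bool" where
  "trellis_iso n T T' f \<longleftrightarrow>
     (\<forall>i<n. linear_on (Vt T i) (f i) \<and> bij_betw (f i) (Vt T i) (Vt T' i)) \<and>
     (\<forall>i<n. \<forall>v\<in>Vt T i. \<forall>w\<in>Vt T (nxt n i). \<forall>\<alpha>.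
         (v, \<alpha>, w) \<in> Et T i \<longleftrightarrow> (f i v, \<alpha>, f (nxt n i) w) \<in> Et T' i)"

text \<open>Products.  A tuple (v_0,...,v_{r-1}) of vertices is encoded linearly and injectively
as a single coordinate vector via prod_encode.\<close>
definition enc :: "nat \<Rightarrow> (nat \<Rightarrow> ('a::zero) vert) \<Rightarrow> 'a vert" where
  "enc r vs = (\<lambda>m. case prod_decode m of (k, j) \<Rightarrow> if k < r then vs k j else 0)"

definition tprod :: "nat \<Rightarrow> nat \<Rightarrow> (nat \<Rightarrow> ('a::comm_monoid_add) trellis) \<Rightarrow> 'a trellis" where
  "tprod n r Ts = \<lparr> Vt = (\<lambda>i. if i < n then {enc r vs | vs. \<forall>k<r. vs k \<in> Vt (Ts k) i} else {}),
                     Et = (\<lambda>i. if i < n then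
                             {(enc r vs, (\<Sum>k<r. \<alpha> k), enc r ws) | vs \<alpha> ws.
                                \<forall>k<r. (vs k, \<alpha> k, ws k) \<in> Et (Ts k) i}
                           else {}) \<rparr>"

definition inj_k :: "nat \<Rightarrow> nat \<Rightarrow> ('a::zero) vert \<Rightarrow> 'a vert" where
  "inj_k r k v = enc r (\<lambda>j. if j = k then v else 0)"

definition copy_k :: "nat \<Rightarrow> nat \<Rightarrow> nat \<Rightarrow> ('a::zero) trellis \<Rightarrow> 'a trellis" where
  "copy_k n r k Tk = \<lparr> Vt = (\<lambda>i. if i < n then inj_k r k ` Vt Tk i else {}),
                        Et = (\<lambda>i. if i < n then
                                {(inj_k r k v, \<alpha>, inj_k r k w) | v \<alpha> w. (v, \<alpha>, w) \<in> Et Tk i}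
                              else {}) \<rparr>"

definition img_trellis :: "nat \<Rightarrow> (nat \<Rightarrow> 'a vert \<Rightarrow> 'a vert) \<Rightarrow> 'a trellis \<Rightarrow> 'a trellis" where
  "img_trellis n f T = \<lparr> Vt = (\<lambda>i. if i < n then f i ` Vt T i else {}),
                          Et = (\<lambda>i. if i < n then
                                  {(f i v, \<alpha>, f (nxt n i) w) | v \<alpha> w. (v, \<alpha>, w) \<in> Et T i}
                                else {}) \<rparr>"

definition preimg_trellis :: "nat \<Rightarrow> (nat \<Rightarrow> 'a vert \<Rightarrow> 'a vert) \<Rightarrow> 'a trellis \<Rightarrow> 'a trellis \<Rightarrow> 'a trellis" where
  "preimg_trellis n f T T'' = \<lparr> Vt = (\<lambda>i. {v \<in> Vt T i. f i v \<in> Vt T'' i}),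
                                 Et = (\<lambda>i. {(v, \<alpha>, w) \<in> Et T i. (f i v, \<alpha>, f (nxt n i) w) \<in> Et T'' i}) \<rparr>"

end

theory Submission
  imports Defs
begin

text \<open>
  (1) For the full span the hypothesis says that every cycle splits uniquely into components
  from the subspaces S k.  The span (i, n-1) is the condition that vertex i vanishes, so the
  hypothesis for it shows that the i-th vertex of a cycle determines the i-th vertices of its
  components: mapping a vertex to the tuple of these is a well-defined linear bijection onto the
  product, and it respects edges because T is reduced.  The span (i+1, n-2) is the condition that
  the edge at i vanishes; since every edge of a cycle of T(S k) is an edge of a cycle in S k,
  this shows that the components of such a cycle outside S k vanish, i.e. the cycle lies in S k.

  (2) Reading off the coordinates of f splits a cycle of T into cycles of the preimages of the
  factors.  Edges 0 \<rightarrow> 0 of the factors whose labels sum to zero carry only zero labels, because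
  by the dimension bound at most one factor has such an edge with nonzero label; this makes the
  splitting unique and lets the components inherit every span of the cycle.
\<close>

section \<open>Cycles of linear trellises\<close>

lemma vector_space_vsc: "vector_space (vsc :: 'a::field \<Rightarrow> 'a vert \<Rightarrow> 'a vert)"
  by unfold_locales (auto simp: vsc_def fun_eq_iff algebra_simps)

lemma vector_space_esc: "vector_space (esc :: 'a::field \<Rightarrow> 'a edge \<Rightarrow> 'a edge)"
  by unfold_locales (simp_all add: esc_def vsc_def fun_eq_iff algebra_simps case_prod_beta)

lemma vector_space_csc: "vector_space (csc :: 'a::field \<Rightarrow> 'a cyc \<Rightarrow> 'a cyc)"
  by unfold_locales (simp_all add: csc_def vsc_def fun_eq_iff algebra_simps case_prod_beta)

interpretation vsc: vector_space "vsc :: 'a::field \<Rightarrow> 'a vert \<Rightarrow> 'a vert"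
  by (rule vector_space_vsc)

interpretation esc: vector_space "esc :: 'a::field \<Rightarrow> 'a edge \<Rightarrow> 'a edge"
  by (rule vector_space_esc)

interpretation csc: vector_space "csc :: 'a::field \<Rightarrow> 'a cyc \<Rightarrow> 'a cyc"
  by (rule vector_space_csc)

lemma fst_csc [simp]: "fst (csc c x) i = vsc c (fst x i)"
  by (cases x) (simp add: csc_def)

lemma snd_csc [simp]: "snd (csc c x) i = c * snd x i"
  by (cases x) (simp add: csc_def)

lemma sum_fun_apply: "(\<Sum>k\<in>A. g k) i = (\<Sum>k\<in>A. g k i)"
  by (induction A rule: infinite_finite_induct) auto

lemma fst_sum_apply: "fst (\<Sum>k\<in>A. x k) i = (\<Sum>k\<in>A. fst (x k) i)"
  by (simp add: fst_sum sum_fun_apply)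

lemma snd_sum_apply: "snd (\<Sum>k\<in>A. x k) i = (\<Sum>k\<in>A. snd (x k) i)"
  by (simp add: snd_sum sum_fun_apply)

lemma vsc_sum: "vsc c (\<Sum>k\<in>A. v k) = (\<Sum>k\<in>A. vsc c (v k))"
  by (simp add: vsc_def fun_eq_iff sum_distrib_left sum_fun_apply)

lemma sum_lessThan_delta: "k < (r::nat) \<Longrightarrow> (\<Sum>j<r. if j = k then x else 0) = (x::'b::comm_monoid_add)"
  by (subst sum.delta) auto

lemma cyc_eqI:
  "(\<And>i. fst x i = fst y i) \<Longrightarrow> (\<And>i. snd x i = snd y i) \<Longrightarrow> x = (y :: ('a::zero) cyc)"
  by (simp add: prod_eq_iff fun_eq_iff)

lemma mem_cycles_iff:
  "x \<in> cycles n T \<longleftrightarrow>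
     (\<forall>i<n. (fst x i, snd x i, fst x (nxt n i)) \<in> Et T i) \<and> (\<forall>i\<ge>n. fst x i = 0 \<and> snd x i = 0)"
  by (cases x) (simp add: cycles_def)

lemma nxt_less: "n \<ge> 1 \<Longrightarrow> nxt n i < n"
  by (simp add: nxt_def)

context
  fixes n :: nat and T :: "('a::field) trellis"
  assumes linear: "linear_trellis n T"
begin

lemma subspace_Vt: "i < n \<Longrightarrow> vsc.subspace (Vt T i)"
  using linear by (simp add: linear_trellis_def)

lemma subspace_Et: "i < n \<Longrightarrow> esc.subspace (Et T i)"
  using linear by (simp add: linear_trellis_def)

lemma zero_edge: "i < n \<Longrightarrow> (0, 0, 0) \<in> Et T i"
  using esc.subspace_0[OF subspace_Et] by (simp add: zero_prod_def)

lemma edge_endpoints: "i < n \<Longrightarrow> (v, \<alpha>, w) \<in> Et T i \<Longrightarrow> v \<in> Vt T i \<and> w \<in> Vt T (nxt n i)"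
  using linear unfolding linear_trellis_def is_trellis_def by blast

lemma subspace_cycles: "csc.subspace (cycles n T)"
  unfolding csc.subspace_def mem_cycles_iff
proof (intro conjI ballI allI impI)
  fix i assume i: "i < n"
  show "(fst 0 i, snd 0 i, fst 0 (nxt n i)) \<in> Et T i"
    using zero_edge[OF i] by simp
  show "(fst (x + y) i, snd (x + y) i, fst (x + y) (nxt n i)) \<in> Et T i"
    if "x \<in> cycles n T" "y \<in> cycles n T" for x y
    using esc.subspace_add[OF subspace_Et[OF i], of "(fst x i, snd x i, fst x (nxt n i))"
        "(fst y i, snd y i, fst y (nxt n i))"] that i by (simp add: mem_cycles_iff)
  show "(fst (csc c x) i, snd (csc c x) i, fst (csc c x) (nxt n i)) \<in> Et T i"
    if "x \<in> cycles n T" for c x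
    using esc.subspace_scale[OF subspace_Et[OF i], of "(fst x i, snd x i, fst x (nxt n i))" c]
      that i by (simp add: mem_cycles_iff esc_def)
qed (auto simp: mem_cycles_iff)

lemma cycle_vertex: "x \<in> cycles n T \<Longrightarrow> i < n \<Longrightarrow> fst x i \<in> Vt T i"
  unfolding mem_cycles_iff using edge_endpoints by blast

end

section \<open>Products, cyclic intervals and spans\<close>

definition prj :: "nat \<Rightarrow> ('a::zero) vert \<Rightarrow> 'a vert" where
  "prj k e = (\<lambda>j. e (prod_encode (k, j)))"

lemma prj_enc [simp]: "k < r \<Longrightarrow> prj k (enc r vs) = vs k"
  by (simp add: prj_def enc_def)

lemma enc_cong: "(\<And>k. k < r \<Longrightarrow> a k = b k) \<Longrightarrow> enc r a = enc r b"
  by (auto simp: enc_def fun_eq_iff split: prod.split)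

lemma enc_eq_iff: "enc r a = enc r b \<longleftrightarrow> (\<forall>k<r. a k = b k)"
  by (metis enc_cong prj_enc)

lemma enc_prj: "enc r (\<lambda>k. prj k (enc r vs)) = enc r vs"
  by (rule enc_cong) simp

lemma enc_add: "enc r (\<lambda>k. a k + b k) = enc r a + enc r (b :: nat \<Rightarrow> ('a::monoid_add) vert)"
  by (auto simp: enc_def fun_eq_iff split: prod.split)

lemma enc_vsc: "enc r (\<lambda>k. vsc c (a k)) = vsc c (enc r (a :: nat \<Rightarrow> ('a::field) vert))"
  by (auto simp: enc_def vsc_def fun_eq_iff split: prod.split)

lemma inj_k_zero [simp]: "inj_k r k 0 = 0"
  by (simp add: inj_k_def enc_def fun_eq_iff split: prod.split)

lemma sum_inj_k: "(\<Sum>k<r. inj_k r k (b k)) = enc r (b :: nat \<Rightarrow> ('a::comm_monoid_add) vert)"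
proof
  fix m
  obtain k j where "prod_decode m = (k, j)" by (cases "prod_decode m")
  then show "(\<Sum>k<r. inj_k r k (b k)) m = enc r b m"
    by (simp add: sum_fun_apply inj_k_def enc_def if_distrib[of "\<lambda>x. x j"] cong: if_cong)
qed

lemma prj_inj_k [simp]: "k < r \<Longrightarrow> prj k (inj_k r k v) = v"
  by (simp add: inj_k_def)

lemma prj_zero [simp]: "prj k 0 = 0"
  by (simp add: prj_def fun_eq_iff)

lemma mem_closed_iv_iff:
  assumes "a < n" "m < n" "l < n"
  shows "m \<in> closed_iv n a l \<longleftrightarrow> (if a \<le> m then m - a else m + n - a) \<le> l"
proof
  assume "m \<in> closed_iv n a l"
  then obtain j where j: "j \<le> l" and m: "m = (a + j) mod n"
    by (auto simp: closed_iv_def)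
  show "(if a \<le> m then m - a else m + n - a) \<le> l"
  proof (cases "a + j < n")
    case True
    then show ?thesis using m j by simp
  next
    case False
    moreover have "a + j - n < n" using j assms by linarith
    ultimately have "m = a + j - n" using m by (simp add: le_mod_geq)
    then show ?thesis using j assms False by auto
  qed
next
  assume off: "(if a \<le> m then m - a else m + n - a) \<le> l"
  define j where "j = (if a \<le> m then m - a else m + n - a)"
  have "(a + j) mod n = m"
    using assms by (cases "a \<le> m") (simp_all add: j_def le_mod_geq)
  moreover have "j \<le> l"
    using off by (simp add: j_def)
  ultimately show "m \<in> closed_iv n a l"
    unfolding closed_iv_def by blast
qed

lemma nxt_eq:
  assumes "i < n"
  shows "nxt n i = (if Suc i < n then Suc i else 0)"
proof (cases "Suc i < n")
  case False
  with assms have "Suc i = n" by simp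
  then show ?thesis by (simp add: nxt_def)
qed (simp add: nxt_def)

lemma closed_iv_full: "a < n \<Longrightarrow> m < n \<Longrightarrow> m \<in> closed_iv n a (n - 1)"
  by (subst mem_closed_iv_iff) auto

lemma closed_iv_0: "a < n \<Longrightarrow> closed_iv n a 0 = {a}"
  by (auto simp: closed_iv_def)

lemma halfopen_iv_0: "a < n \<Longrightarrow> halfopen_iv n a 0 = {}"
  by (simp add: halfopen_iv_def closed_iv_0)

lemma nxt_notin_halfopen_iv:
  assumes "a < n" "l < n" "i < n" "i \<notin> closed_iv n a l"
  shows "nxt n i \<notin> halfopen_iv n a l"
proof -
  have "nxt n i < n"
    using assms by (simp add: nxt_def)
  then show ?thesis
    using assms by (auto simp: halfopen_iv_def mem_closed_iv_iff nxt_eq split: if_splits)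
qed

lemma mem_closed_iv_nxt_iff:
  assumes "n \<ge> 2" "i < n" "m < n"
  shows "m \<in> closed_iv n (nxt n i) (n - 2) \<longleftrightarrow> m \<noteq> i"
  using assms by (subst mem_closed_iv_iff) (auto simp: nxt_eq)

lemma has_span_Sp_iff:
  "has_span n (Sp a l) x \<longleftrightarrow>
     {i. i < n \<and> fst x i \<noteq> 0} \<subseteq> halfopen_iv n a l \<and> {i. i < n \<and> snd x i \<noteq> 0} \<subseteq> closed_iv n a l"
  by (cases x) (simp add: has_span_def)

lemma has_span_SEmpty_iff: "has_span n SEmpty x \<longleftrightarrow> x = 0"
  by (cases x) (simp add: has_span_def)

lemma has_span_SFull: "has_span n SFull x"
  by (cases x) (simp add: has_span_def)

lemma span_cycles_SFull: "span_cycles n SFull T = cycles n T"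
  by (simp add: span_cycles_def has_span_SFull)

lemma has_span_add:
  assumes "has_span n s x" "has_span n s y"
  shows "has_span n s (x + y :: ('a::field) cyc)"
proof (cases s)
  case (Sp a l)
  have "{i. i < n \<and> fst (x + y) i \<noteq> 0} \<subseteq> {i. i < n \<and> fst x i \<noteq> 0} \<union> {i. i < n \<and> fst y i \<noteq> 0}"
    "{i. i < n \<and> snd (x + y) i \<noteq> 0} \<subseteq> {i. i < n \<and> snd x i \<noteq> 0} \<union> {i. i < n \<and> snd y i \<noteq> 0}"
    by auto
  with assms show ?thesis
    unfolding Sp has_span_Sp_iff by blast
qed (use assms in \<open>simp_all add: has_span_SEmpty_iff has_span_SFull\<close>)

lemma has_span_csc:
  assumes "has_span n s x"
  shows "has_span n s (csc c x :: ('a::field) cyc)"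
proof (cases s)
  case (Sp a l)
  have "{i. i < n \<and> fst (csc c x) i \<noteq> 0} \<subseteq> {i. i < n \<and> fst x i \<noteq> 0}"
    "{i. i < n \<and> snd (csc c x) i \<noteq> 0} \<subseteq> {i. i < n \<and> snd x i \<noteq> 0}"
    by (auto simp: vsc_def)
  with assms show ?thesis
    unfolding Sp has_span_Sp_iff by blast
qed (use assms in \<open>simp_all add: has_span_SEmpty_iff has_span_SFull\<close>)

lemma subspace_has_span: "csc.subspace {x :: ('a::field) cyc. has_span n s x}"
proof -
  have "has_span n s (0 :: 'a cyc)"
    by (cases s) (simp_all add: has_span_SEmpty_iff has_span_SFull has_span_Sp_iff)
  then show ?thesis
    by (simp add: csc.subspace_def has_span_add has_span_csc)
qed

lemma subspace_span_cycles: "linear_trellis n T \<Longrightarrow> csc.subspace (span_cycles n s T)"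
  using csc.subspace_inter[OF subspace_cycles subspace_has_span]
  by (simp add: span_cycles_def Collect_conj_eq Int_commute)

lemma has_span_vertex_complement_iff:
  "i < n \<Longrightarrow> has_span n (Sp i (n - 1)) x \<longleftrightarrow> fst x i = 0"
  using closed_iv_full[of i n] by (auto simp: has_span_Sp_iff halfopen_iv_def)

lemma has_span_edge_complement_iff:
  assumes "n \<ge> 2" "i < n"
  shows "has_span n (Sp (nxt n i) (n - 2)) x \<longleftrightarrow>
           fst x i = 0 \<and> snd x i = 0 \<and> fst x (nxt n i) = 0"
  using assms nxt_less[of n i]
  by (auto simp: has_span_Sp_iff halfopen_iv_def mem_closed_iv_nxt_iff)

lemma Vt_tprod: "i < n \<Longrightarrow> Vt (tprod n r Ts) i = {enc r vs | vs. \<forall>k<r. vs k \<in> Vt (Ts k) i}"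
  by (simp add: tprod_def)

lemma Et_tprod:
  "i < n \<Longrightarrow> Et (tprod n r Ts) i =
     {(enc r vs, \<Sum>k<r. \<alpha> k, enc r ws) | vs \<alpha> ws. \<forall>k<r. (vs k, \<alpha> k, ws k) \<in> Et (Ts k) i}"
  by (simp add: tprod_def)

lemma Et_copy_k:
  "i < n \<Longrightarrow> Et (copy_k n r k Tk) i = {(inj_k r k v, \<alpha>, inj_k r k w) | v \<alpha> w. (v, \<alpha>, w) \<in> Et Tk i}"
  by (simp add: copy_k_def)

lemma enc_prj_Vt_tprod: "i < n \<Longrightarrow> y \<in> Vt (tprod n r Ts) i \<Longrightarrow> enc r (\<lambda>k. prj k y) = y"
  unfolding Vt_tprod using enc_prj by fastforce

lemma mem_Vt_sub_trellis_iff: "i < n \<Longrightarrow> v \<in> Vt (sub_trellis n S) i \<longleftrightarrow> (\<exists>x\<in>S. v = fst x i)"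
  by (force simp: sub_trellis_def)

lemma mem_Et_sub_trellis_iff:
  "i < n \<Longrightarrow> e \<in> Et (sub_trellis n S) i \<longleftrightarrow> (\<exists>x\<in>S. e = (fst x i, snd x i, fst x (nxt n i)))"
  by (force simp: sub_trellis_def)

lemma edges_sub_trellis_choice:
  assumes i: "i < n" and "\<forall>k<r. (vs k, \<beta> k, ws k) \<in> Et (sub_trellis n (S k)) i"
  obtains u where
    "\<forall>k<r. u k \<in> S k \<and> vs k = fst (u k) i \<and> \<beta> k = snd (u k) i \<and> ws k = fst (u k) (nxt n i)"
proof -
  have "\<forall>k\<in>{..<r}. \<exists>x. x \<in> S k \<and> vs k = fst x i \<and> \<beta> k = snd x i \<and> ws k = fst x (nxt n i)"
  proof
    fix k assume "k \<in> {..<r}"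
    then have "(vs k, \<beta> k, ws k) \<in> Et (sub_trellis n (S k)) i"
      using assms(2) by simp
    then obtain x where "x \<in> S k" "(vs k, \<beta> k, ws k) = (fst x i, snd x i, fst x (nxt n i))"
      using mem_Et_sub_trellis_iff[OF i] by blast
    then show "\<exists>x. x \<in> S k \<and> vs k = fst x i \<and> \<beta> k = snd x i \<and> ws k = fst x (nxt n i)"
      by blast
  qed
  from bchoice[OF this] obtain u where
    "\<forall>k\<in>{..<r}. u k \<in> S k \<and> vs k = fst (u k) i \<and> \<beta> k = snd (u k) i \<and> ws k = fst (u k) (nxt n i)" ..
  then show thesis
    using that by blast
qed

section \<open>Decompositions of the cycle space\<close>

locale cycle_decomposition =
  fixes n r :: nat and T :: "('a::field) trellis" and S :: "nat \<Rightarrow> 'a cyc set"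
  assumes n_pos: "n \<ge> 1"
    and linear: "linear_trellis n T"
    and reduced: "reduced n T"
    and subspaces: "\<forall>k<r. S k \<subseteq> cycles n T \<and> csc.subspace (S k)"
    and direct_sums: "\<forall>s. valid_span n s \<longrightarrow>
                        direct_sum (span_cycles n s T) (\<lambda>k. S k \<inter> span_cycles n s T) r"
begin

lemma S_subset_cycles: "k < r \<Longrightarrow> S k \<subseteq> cycles n T"
  using subspaces by blast

lemma subspace_S: "k < r \<Longrightarrow> csc.subspace (S k)"
  using subspaces by blast

lemma nxt_less_n: "nxt n i < n"
  using n_pos by (rule nxt_less)

lemma sum_in_cycles: "\<forall>k<r. u k \<in> S k \<Longrightarrow> (\<Sum>k<r. u k) \<in> cycles n T"
  using S_subset_cycles by (intro csc.subspace_sum[OF subspace_cycles[OF linear]]) auto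

lemma decompose_span_cycle:
  assumes "valid_span n s" "x \<in> span_cycles n s T"
  obtains u where "\<forall>k<r. u k \<in> S k \<inter> span_cycles n s T" "x = (\<Sum>k<r. u k)"
  using assms direct_sums unfolding direct_sum_def by blast

lemma decompose_cycle:
  assumes "x \<in> cycles n T"
  obtains u where "\<forall>k<r. u k \<in> S k" "x = (\<Sum>k<r. u k)"
proof -
  have "valid_span n SFull" "x \<in> span_cycles n SFull T"
    using assms by (simp_all add: valid_span_def span_cycles_SFull)
  then show thesis
    using decompose_span_cycle that by blast
qed

lemma decomposition_unique:
  assumes "\<forall>k<r. u k \<in> S k" "\<forall>k<r. u' k \<in> S k" "(\<Sum>k<r. u k) = (\<Sum>k<r. u' k)" "k < r"
  shows "u k = u' k"
proof -
  have "direct_sum (cycles n T) (\<lambda>k. S k \<inter> cycles n T) r"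
    using direct_sums[rule_format, of SFull] by (simp add: valid_span_def span_cycles_SFull)
  then show ?thesis
    using assms S_subset_cycles unfolding direct_sum_def by blast
qed

lemma component_has_span:
  assumes "valid_span n s" "\<forall>j<r. u j \<in> S j" "has_span n s (\<Sum>j<r. u j)" "k < r"
  shows "has_span n s (u k)"
proof -
  have "(\<Sum>j<r. u j) \<in> span_cycles n s T"
    using assms(2,3) sum_in_cycles by (simp add: span_cycles_def)
  then obtain w where w: "\<forall>j<r. w j \<in> S j \<inter> span_cycles n s T" "(\<Sum>j<r. u j) = (\<Sum>j<r. w j)"
    using decompose_span_cycle[OF assms(1)] by blast
  then have "u k = w k"
    using decomposition_unique assms(2,4) by blast
  then show ?thesis
    using w(1) assms(4) by (simp add: span_cycles_def)
qed

lemma component_vertex_eq: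
  assumes "i < n" "\<forall>j<r. u j \<in> S j" "\<forall>j<r. u' j \<in> S j"
    and "fst (\<Sum>j<r. u j) i = fst (\<Sum>j<r. u' j) i" "k < r"
  shows "fst (u k) i = fst (u' k) i"
proof -
  have d: "\<forall>j<r. u j - u' j \<in> S j"
    using assms(2,3) subspace_S csc.subspace_diff by blast
  have "fst (\<Sum>j<r. u j - u' j) i = 0"
    using assms(4) by (simp add: sum_subtractf)
  then have "has_span n (Sp i (n - 1)) (\<Sum>j<r. u j - u' j)"
    using has_span_vertex_complement_iff[OF assms(1)] by blast
  moreover have "valid_span n (Sp i (n - 1))"
    using assms(1) by (simp add: valid_span_def)
  ultimately have "has_span n (Sp i (n - 1)) (u k - u' k)"
    using component_has_span[OF _ d _ assms(5)] by blast
  then have "fst (u k - u' k) i = 0"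
    using has_span_vertex_complement_iff[OF assms(1)] by blast
  then show ?thesis
    by simp
qed

lemma component_edge_eq_0:
  assumes "i < n" "\<forall>j<r. u j \<in> S j" "k < r"
    and "fst (\<Sum>j<r. u j) i = 0" "snd (\<Sum>j<r. u j) i = 0" "fst (\<Sum>j<r. u j) (nxt n i) = 0"
  shows "fst (u k) i = 0 \<and> snd (u k) i = 0"
proof (cases "n = 1")
  \<comment> \<open>for n = 1 the span (nxt n i, n - 2) is (0, 0), which allows a nonzero label at 0\<close>
  case True
  with assms(1) have "i = 0" by simp
  have "(\<Sum>j<r. u j) = 0"
  proof (rule cyc_eqI)
    fix m
    show "fst (\<Sum>j<r. u j) m = fst 0 m" "snd (\<Sum>j<r. u j) m = snd 0 m"
      using sum_in_cycles[OF assms(2)] assms(4,5) True \<open>i = 0\<close>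
      by (cases "m = 0"; simp add: mem_cycles_iff)+
  qed
  then have "u k = 0"
    using component_has_span[OF _ assms(2) _ assms(3), of SEmpty]
    by (simp add: valid_span_def has_span_SEmpty_iff)
  then show ?thesis by simp
next
  case False
  with n_pos have n2: "n \<ge> 2" by simp
  have "has_span n (Sp (nxt n i) (n - 2)) (\<Sum>j<r. u j)"
    using has_span_edge_complement_iff[OF n2 assms(1)] assms(4-6) by blast
  moreover have "valid_span n (Sp (nxt n i) (n - 2))"
    using nxt_less_n n2 by (simp add: valid_span_def)
  ultimately have "has_span n (Sp (nxt n i) (n - 2)) (u k)"
    using component_has_span[OF _ assms(2) _ assms(3)] by blast
  then show ?thesis
    using has_span_edge_complement_iff[OF n2 assms(1)] by blast
qed

lemma other_component_edge_eq_0: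
  assumes i: "i < n" and u: "\<forall>l<r. u l \<in> S l" and k: "k < r" "x \<in> S k"
    and j: "j < r" "j \<noteq> k"
    and "fst (\<Sum>l<r. u l) i = fst x i" "snd (\<Sum>l<r. u l) i = snd x i"
    and "fst (\<Sum>l<r. u l) (nxt n i) = fst x (nxt n i)"
  shows "fst (u j) i = 0 \<and> snd (u j) i = 0"
proof -
  define v where "v l = u l - (if l = k then x else 0)" for l
  have v: "\<forall>l<r. v l \<in> S l"
  proof (intro allI impI)
    fix l assume l: "l < r"
    show "v l \<in> S l"
      using csc.subspace_diff[OF subspace_S[OF l]] csc.subspace_0[OF subspace_S[OF l]] u l k
      by (simp add: v_def)
  qed
  have "(\<Sum>l<r. v l) = (\<Sum>l<r. u l) - x"
    using k by (simp add: v_def sum_subtractf sum_lessThan_delta)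
  then have "fst (v j) i = 0 \<and> snd (v j) i = 0"
    using component_edge_eq_0[OF i v j(1)] assms(7-9) by simp
  then show ?thesis
    using j by (simp add: v_def)
qed

lemma cycles_sub_trellis_subset: "k < r \<Longrightarrow> cycles n (sub_trellis n (S k)) \<subseteq> S k"
proof
  fix y assume k: "k < r" and y: "y \<in> cycles n (sub_trellis n (S k))"
  have "\<forall>i\<in>{..<n}. \<exists>x. x \<in> S k \<and>
      fst x i = fst y i \<and> snd x i = snd y i \<and> fst x (nxt n i) = fst y (nxt n i)"
    using y by (force simp: mem_cycles_iff mem_Et_sub_trellis_iff)
  from bchoice[OF this] obtain X where X_all: "\<forall>i\<in>{..<n}. X i \<in> S k \<and>
      fst (X i) i = fst y i \<and> snd (X i) i = snd y i \<and> fst (X i) (nxt n i) = fst y (nxt n i)" ..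
  then have X: "X i \<in> S k \<and> fst (X i) i = fst y i \<and> snd (X i) i = snd y i \<and>
      fst (X i) (nxt n i) = fst y (nxt n i)" if "i < n" for i
    using that by blast
  have "y \<in> cycles n T"
    using y X S_subset_cycles[OF k] by (fastforce simp: mem_cycles_iff)
  then obtain u where u: "\<forall>j<r. u j \<in> S j" and y_sum: "y = (\<Sum>j<r. u j)"
    by (rule decompose_cycle)
  have "u j = 0" if j: "j < r" "j \<noteq> k" for j
  proof -
    have "fst (u j) i = 0 \<and> snd (u j) i = 0" for i
    proof (cases "i < n")
      case True
      with X y_sum have "X i \<in> S k" "fst (\<Sum>l<r. u l) i = fst (X i) i"
        "snd (\<Sum>l<r. u l) i = snd (X i) i" "fst (\<Sum>l<r. u l) (nxt n i) = fst (X i) (nxt n i)"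
        by simp_all
      then show ?thesis
        using other_component_edge_eq_0[OF True u k _ j] by blast
    next
      case False
      have "u j \<in> cycles n T"
        using u j S_subset_cycles by blast
      then show ?thesis
        using False by (simp add: mem_cycles_iff)
    qed
    then show ?thesis
      by (intro cyc_eqI) simp_all
  qed
  then have "y = (\<Sum>j<r. if j = k then u k else 0)"
    unfolding y_sum by (intro sum.cong) auto
  also have "\<dots> = u k"
    using k by (rule sum_lessThan_delta)
  finally show "y \<in> S k"
    using u k by simp
qed

lemma vertex_decompose:
  assumes "i < n" "v \<in> Vt T i"
  obtains u where "\<forall>k<r. u k \<in> S k" "v = fst (\<Sum>k<r. u k) i"
proof -
  obtain \<alpha> w where "(v, \<alpha>, w) \<in> Et T i"
    using linear assms unfolding linear_trellis_def is_trellis_def by blast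
  then have "\<exists>x\<in>cycles n T. (v, \<alpha>, w) = (fst x i, snd x i, fst x (nxt n i))"
    using reduced assms(1) unfolding reduced_def case_prod_unfold by blast
  then obtain x where x: "x \<in> cycles n T" "v = fst x i"
    by auto
  obtain u where u: "\<forall>k<r. u k \<in> S k" "x = (\<Sum>k<r. u k)"
    using decompose_cycle[OF x(1)] .
  show thesis
    using u x(2) by (intro that) simp_all
qed

text \<open>Any decomposition may be chosen here: by component_vertex_eq the component vertices do
  not depend on the choice.\<close>

definition split_vertex :: "nat \<Rightarrow> 'a vert \<Rightarrow> 'a vert" where
  "split_vertex i v =
     enc r (\<lambda>k. fst ((SOME u. (\<forall>k<r. u k \<in> S k) \<and> v = fst (\<Sum>k<r. u k) i) k) i)"

lemma split_vertex_sum: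
  assumes "i < n" "\<forall>k<r. u k \<in> S k"
  shows "split_vertex i (fst (\<Sum>k<r. u k) i) = enc r (\<lambda>k. fst (u k) i)"
proof -
  let ?P = "\<lambda>u'. (\<forall>k<r. u' k \<in> S k) \<and> fst (\<Sum>k<r. u k) i = fst (\<Sum>k<r. u' k) i"
  have P: "?P (SOME u'. ?P u')"
    by (rule someI[of ?P u]) (simp add: assms(2))
  have "fst ((SOME u'. ?P u') k) i = fst (u k) i" if "k < r" for k
    using component_vertex_eq[OF assms(1) conjunct1[OF P] assms(2) conjunct2[OF P, symmetric] that] .
  then show ?thesis
    unfolding split_vertex_def by (rule enc_cong)
qed

lemma split_vertex_S:
  assumes "k < r" "x \<in> S k" "i < n"
  shows "split_vertex i (fst x i) = inj_k r k (fst x i)"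
proof -
  let ?u = "\<lambda>j. if j = k then x else 0"
  have u: "\<forall>j<r. ?u j \<in> S j"
    using assms(2) csc.subspace_0[OF subspace_S] by simp
  have "(\<Sum>j<r. ?u j) = x"
    using assms(1) by (rule sum_lessThan_delta)
  then have "split_vertex i (fst x i) = enc r (\<lambda>j. fst (?u j) i)"
    using split_vertex_sum[OF assms(3) u] by simp
  also have "\<dots> = inj_k r k (fst x i)"
    unfolding inj_k_def by (rule enc_cong) simp
  finally show ?thesis .
qed

lemma split_vertex_linear:
  assumes i: "i < n"
  shows "linear_on (Vt T i) (split_vertex i)"
  unfolding linear_on_def
proof (intro conjI ballI allI)
  fix x y assume "x \<in> Vt T i" "y \<in> Vt T i"
  then obtain u u' where u: "\<forall>k<r. u k \<in> S k" "x = fst (\<Sum>k<r. u k) i"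
    and u': "\<forall>k<r. u' k \<in> S k" "y = fst (\<Sum>k<r. u' k) i"
    using vertex_decompose[OF i] by metis
  have "\<forall>k<r. u k + u' k \<in> S k"
    using u(1) u'(1) subspace_S csc.subspace_add by blast
  moreover have "x + y = fst (\<Sum>k<r. u k + u' k) i"
    unfolding u(2) u'(2) sum.distrib by simp
  ultimately have "split_vertex i (x + y) = enc r (\<lambda>k. fst (u k) i + fst (u' k) i)"
    using split_vertex_sum[OF i] by simp
  also have "\<dots> = split_vertex i x + split_vertex i y"
    unfolding u(2) u'(2) split_vertex_sum[OF i u(1)] split_vertex_sum[OF i u'(1)] by (rule enc_add)
  finally show "split_vertex i (x + y) = split_vertex i x + split_vertex i y" .
next
  fix c x assume "x \<in> Vt T i"
  then obtain u where u: "\<forall>k<r. u k \<in> S k" "x = fst (\<Sum>k<r. u k) i"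
    using vertex_decompose[OF i] by metis
  have "\<forall>k<r. csc c (u k) \<in> S k"
    using u(1) subspace_S csc.subspace_scale by blast
  moreover have "vsc c x = fst (\<Sum>k<r. csc c (u k)) i"
    unfolding u(2) by (simp add: fst_sum_apply vsc_sum)
  ultimately have "split_vertex i (vsc c x) = enc r (\<lambda>k. vsc c (fst (u k) i))"
    using split_vertex_sum[OF i] by simp
  also have "\<dots> = vsc c (split_vertex i x)"
    unfolding u(2) split_vertex_sum[OF i u(1)] by (rule enc_vsc)
  finally show "split_vertex i (vsc c x) = vsc c (split_vertex i x)" .
qed

lemma split_vertex_inj:
  assumes i: "i < n" and "x \<in> Vt T i" "y \<in> Vt T i" "split_vertex i x = split_vertex i y"
  shows "x = y"
proof -
  obtain u u' where u: "\<forall>k<r. u k \<in> S k" "x = fst (\<Sum>k<r. u k) i"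
    and u': "\<forall>k<r. u' k \<in> S k" "y = fst (\<Sum>k<r. u' k) i"
    using vertex_decompose[OF i] assms(2,3) by metis
  then have "\<forall>k<r. fst (u k) i = fst (u' k) i"
    using split_vertex_sum[OF i] assms(4) by (simp add: enc_eq_iff)
  then show ?thesis
    using u(2) u'(2) by (simp add: fst_sum_apply)
qed

abbreviation product :: "'a trellis" where
  "product \<equiv> tprod n r (\<lambda>k. sub_trellis n (S k))"

lemma split_vertex_bij:
  assumes i: "i < n"
  shows "bij_betw (split_vertex i) (Vt T i) (Vt product i)"
  unfolding bij_betw_def
proof
  show "inj_on (split_vertex i) (Vt T i)"
    using split_vertex_inj[OF i] by (rule inj_onI)
  show "split_vertex i ` Vt T i = Vt product i"
  proof (intro equalityI subsetI)
    fix y assume "y \<in> split_vertex i ` Vt T i"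
    then obtain x where x: "x \<in> Vt T i" "y = split_vertex i x"
      by blast
    obtain u where u: "\<forall>k<r. u k \<in> S k" "x = fst (\<Sum>k<r. u k) i"
      using vertex_decompose[OF i x(1)] .
    have "y = enc r (\<lambda>k. fst (u k) i)"
      using x(2) u(2) split_vertex_sum[OF i u(1)] by simp
    moreover have "\<forall>k<r. fst (u k) i \<in> Vt (sub_trellis n (S k)) i"
      using u(1) mem_Vt_sub_trellis_iff[OF i] by blast
    ultimately show "y \<in> Vt product i"
      unfolding Vt_tprod[OF i] by blast
  next
    fix y assume "y \<in> Vt product i"
    then obtain vs where y: "y = enc r vs" and vs: "\<forall>k<r. vs k \<in> Vt (sub_trellis n (S k)) i"
      unfolding Vt_tprod[OF i] by blast
    have "\<forall>k\<in>{..<r}. \<exists>x. x \<in> S k \<and> vs k = fst x i"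
      using vs mem_Vt_sub_trellis_iff[OF i] by blast
    from bchoice[OF this] obtain u where u: "\<forall>k\<in>{..<r}. u k \<in> S k \<and> vs k = fst (u k) i" ..
    then have u_S: "\<forall>k<r. u k \<in> S k"
      by blast
    have "split_vertex i (fst (\<Sum>k<r. u k) i) = enc r (\<lambda>k. fst (u k) i)"
      using split_vertex_sum[OF i u_S] .
    also have "\<dots> = y"
      unfolding y using u by (intro enc_cong) simp
    finally have "y = split_vertex i (fst (\<Sum>k<r. u k) i)" ..
    moreover have "fst (\<Sum>k<r. u k) i \<in> Vt T i"
      using sum_in_cycles[OF u_S] cycle_vertex[OF linear _ i] by blast
    ultimately show "y \<in> split_vertex i ` Vt T i"
      by blast
  qed
qed

lemma split_vertex_edge:
  assumes i: "i < n" and "(v, \<alpha>, w) \<in> Et T i"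
  shows "(split_vertex i v, \<alpha>, split_vertex (nxt n i) w) \<in> Et product i"
proof -
  obtain x where x: "x \<in> cycles n T" "v = fst x i" "\<alpha> = snd x i" "w = fst x (nxt n i)"
    using reduced assms unfolding reduced_def case_prod_unfold by blast
  obtain u where u: "\<forall>k<r. u k \<in> S k" "x = (\<Sum>k<r. u k)"
    using decompose_cycle[OF x(1)] .
  have "split_vertex i v = enc r (\<lambda>k. fst (u k) i)"
    using split_vertex_sum[OF i u(1)] x(2) u(2) by simp
  moreover have "split_vertex (nxt n i) w = enc r (\<lambda>k. fst (u k) (nxt n i))"
    using split_vertex_sum[OF nxt_less_n u(1)] x(4) u(2) by simp
  moreover have "\<alpha> = (\<Sum>k<r. snd (u k) i)"
    using x(3) u(2) by (simp add: snd_sum_apply)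
  moreover have "\<forall>k<r. (fst (u k) i, snd (u k) i, fst (u k) (nxt n i)) \<in> Et (sub_trellis n (S k)) i"
    using u(1) mem_Et_sub_trellis_iff[OF i] by blast
  ultimately show ?thesis
    unfolding Et_tprod[OF i] by blast
qed

lemma split_vertex_edge_reflect:
  assumes i: "i < n" and v: "v \<in> Vt T i" and w: "w \<in> Vt T (nxt n i)"
    and "(split_vertex i v, \<alpha>, split_vertex (nxt n i) w) \<in> Et product i"
  shows "(v, \<alpha>, w) \<in> Et T i"
proof -
  obtain vs \<beta> ws where e: "split_vertex i v = enc r vs" "\<alpha> = (\<Sum>k<r. \<beta> k)"
      "split_vertex (nxt n i) w = enc r ws"
      "\<forall>k<r. (vs k, \<beta> k, ws k) \<in> Et (sub_trellis n (S k)) i"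
    using assms(4) unfolding Et_tprod[OF i] by blast
  obtain u where
    u: "\<forall>k<r. u k \<in> S k \<and> vs k = fst (u k) i \<and> \<beta> k = snd (u k) i \<and> ws k = fst (u k) (nxt n i)"
    using edges_sub_trellis_choice[OF i e(4)] .
  then have u_S: "\<forall>k<r. u k \<in> S k"
    by blast
  let ?x = "\<Sum>k<r. u k"
  have x: "?x \<in> cycles n T"
    using sum_in_cycles[OF u_S] .
  have "split_vertex i (fst ?x i) = enc r vs"
    unfolding split_vertex_sum[OF i u_S] using u by (intro enc_cong) simp
  then have "fst ?x i = v"
    using split_vertex_inj[OF i cycle_vertex[OF linear x i] v] e(1) by simp
  moreover have "split_vertex (nxt n i) (fst ?x (nxt n i)) = enc r ws"
    unfolding split_vertex_sum[OF nxt_less_n u_S] using u by (intro enc_cong) simp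
  then have "fst ?x (nxt n i) = w"
    using split_vertex_inj[OF nxt_less_n cycle_vertex[OF linear x nxt_less_n] w] e(3) by simp
  moreover have "snd ?x i = \<alpha>"
    unfolding e(2) snd_sum_apply using u by (intro sum.cong) simp_all
  ultimately show ?thesis
    using x i by (auto simp: mem_cycles_iff)
qed

theorem trellis_iso_split_vertex: "trellis_iso n T product split_vertex"
  unfolding trellis_iso_def
  by (intro conjI allI impI ballI iffI split_vertex_linear split_vertex_bij)
    (simp_all add: split_vertex_edge split_vertex_edge_reflect)

theorem img_sub_trellis_split_vertex:
  assumes k: "k < r"
  shows "img_trellis n split_vertex (sub_trellis n (S k)) = copy_k n r k (sub_trellis n (S k))"
proof -
  have V: "split_vertex i ` Vt (sub_trellis n (S k)) i = inj_k r k ` Vt (sub_trellis n (S k)) i"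
    if i: "i < n" for i
  proof (rule image_cong[OF refl])
    fix y assume "y \<in> Vt (sub_trellis n (S k)) i"
    then obtain x where "x \<in> S k" "y = fst x i"
      using mem_Vt_sub_trellis_iff[OF i] by blast
    then show "split_vertex i y = inj_k r k y"
      using split_vertex_S[OF k _ i] by simp
  qed
  have E: "{(split_vertex i v, \<alpha>, split_vertex (nxt n i) w) | v \<alpha> w.
              (v, \<alpha>, w) \<in> Et (sub_trellis n (S k)) i} =
           {(inj_k r k v, \<alpha>, inj_k r k w) | v \<alpha> w. (v, \<alpha>, w) \<in> Et (sub_trellis n (S k)) i}"
    if i: "i < n" for i
  proof -
    have "split_vertex i v = inj_k r k v \<and> split_vertex (nxt n i) w = inj_k r k w"
      if e: "(v, \<alpha>, w) \<in> Et (sub_trellis n (S k)) i" for v \<alpha> w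
    proof -
      obtain x where "x \<in> S k" "(v, \<alpha>, w) = (fst x i, snd x i, fst x (nxt n i))"
        using e mem_Et_sub_trellis_iff[OF i] by blast
      then show ?thesis
        using split_vertex_S[OF k _ i] split_vertex_S[OF k _ nxt_less_n] by simp
    qed
    then show ?thesis
      by (intro Collect_cong) metis
  qed
  show ?thesis
    unfolding img_trellis_def copy_k_def using V E by (simp cong: if_cong)
qed

theorem S_eq_cycles_sub_trellis:
  assumes k: "k < r"
  shows "S k = cycles n (sub_trellis n (S k))"
proof
  show "S k \<subseteq> cycles n (sub_trellis n (S k))"
  proof
    fix x assume x: "x \<in> S k"
    then have "\<forall>i<n. (fst x i, snd x i, fst x (nxt n i)) \<in> Et (sub_trellis n (S k)) i"
      using mem_Et_sub_trellis_iff by blast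
    moreover have "x \<in> cycles n T"
      using x S_subset_cycles[OF k] by blast
    ultimately show "x \<in> cycles n (sub_trellis n (S k))"
      by (simp add: mem_cycles_iff)
  qed
qed (rule cycles_sub_trellis_subset[OF k])

end

section \<open>Isomorphisms onto products\<close>

definition e_cyc :: "nat \<Rightarrow> 'a \<Rightarrow> ('a::zero) cyc" where
  "e_cyc i c = (\<lambda>_. 0, \<lambda>m. if m = i then c else 0)"

lemma e_cyc_eq_0_iff [simp]: "e_cyc i c = 0 \<longleftrightarrow> c = 0"
  by (auto simp: e_cyc_def zero_prod_def fun_eq_iff)

lemma e_cyc_in_span_cycles:
  assumes "linear_trellis n T" "i < n" "(0, c, 0) \<in> Et T i"
  shows "e_cyc i c \<in> span_cycles n (Sp i 0) T"
proof -
  have "(0, snd (e_cyc i c) m, 0) \<in> Et T m" if "m < n" for m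
    using assms zero_edge[OF assms(1) that] by (simp add: e_cyc_def)
  then have "e_cyc i c \<in> cycles n T"
    using assms(2) by (simp add: mem_cycles_iff e_cyc_def)
  moreover have "{m. m < n \<and> snd (e_cyc i c) m \<noteq> 0} \<subseteq> {i}"
    by (auto simp: e_cyc_def)
  ultimately show ?thesis
    using assms(2) by (simp add: span_cycles_def has_span_Sp_iff closed_iv_0 e_cyc_def)
qed

lemma span_cycles_Sp_0:
  assumes "linear_trellis n T" "i < n"
  shows "span_cycles n (Sp i 0) T = {e_cyc i c | c. (0, c, 0) \<in> Et T i}"
proof (intro equalityI subsetI)
  fix x assume x: "x \<in> span_cycles n (Sp i 0) T"
  then have x_cyc: "x \<in> cycles n T" and x_span: "has_span n (Sp i 0) x"
    by (simp_all add: span_cycles_def)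
  have x_zero: "fst x m = 0 \<and> (m \<noteq> i \<longrightarrow> snd x m = 0)" for m
  proof (cases "m < n")
    case True
    then show ?thesis
      using x_span assms(2) by (auto simp: has_span_Sp_iff halfopen_iv_0 closed_iv_0)
  next
    case False
    then show ?thesis
      using x_cyc by (simp add: mem_cycles_iff)
  qed
  then have "x = e_cyc i (snd x i)"
    by (intro cyc_eqI) (simp_all add: e_cyc_def)
  moreover have "(fst x i, snd x i, fst x (nxt n i)) \<in> Et T i"
    using x_cyc assms(2) by (simp add: mem_cycles_iff)
  then have "(0, snd x i, 0) \<in> Et T i"
    using x_zero[THEN conjunct1] by simp
  ultimately show "x \<in> {e_cyc i c | c. (0, c, 0) \<in> Et T i}"
    by blast
qed (use e_cyc_in_span_cycles[OF assms] in blast)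

lemma dim_span_cycles_Sp_0_pos:
  fixes T :: "('a::{field,finite}) trellis"
  assumes "linear_trellis n T" "i < n" "(0, c, 0) \<in> Et T i" "c \<noteq> 0"
  shows "csc.dim (span_cycles n (Sp i 0) T) \<ge> 1"
proof -
  let ?S = "span_cycles n (Sp i 0) T"
  have "finite ?S"
    unfolding span_cycles_Sp_0[OF assms(1,2)] by (simp add: setcompr_eq_image)
  obtain B where B: "B \<subseteq> ?S" "?S \<subseteq> csc.span B" "card B = csc.dim ?S"
    by (rule csc.basis_exists)
  have "B \<noteq> {}"
  proof
    assume "B = {}"
    then have "e_cyc i c \<in> csc.span {}"
      using B(2) e_cyc_in_span_cycles[OF assms(1-3)] by blast
    then show False
      using assms(4) by simp
  qed
  moreover have "finite B"
    using B(1) \<open>finite ?S\<close> by (rule finite_subset)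
  ultimately have "card B \<ge> 1"
    by (simp add: Suc_le_eq card_gt_0_iff)
  with B(3) show ?thesis
    by simp
qed

lemma zero_vertex_edge_labels_eq_0:
  fixes Ts :: "nat \<Rightarrow> ('a::{field,finite}) trellis"
  assumes "\<forall>k<r. linear_trellis n (Ts k)"
    and "(\<Sum>k<r. csc.dim (span_cycles n (Sp i 0) (Ts k))) \<le> 1"
    and "i < n" "\<forall>k<r. (0, c k, 0) \<in> Et (Ts k) i" "(\<Sum>k<r. c k) = 0"
  shows "\<forall>k<r. c k = 0"
proof (rule ccontr)
  let ?d = "\<lambda>k. csc.dim (span_cycles n (Sp i 0) (Ts k))"
  assume "\<not> (\<forall>k<r. c k = 0)"
  then obtain k0 where k0: "k0 < r" "c k0 \<noteq> 0" by auto
  have d_pos: "?d k \<ge> 1" if "k < r" "c k \<noteq> 0" for k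
    using dim_span_cycles_Sp_0_pos[of n "Ts k" i "c k"] assms(1,3,4) that by simp
  have "c k = 0" if "k < r" "k \<noteq> k0" for k
  proof (rule ccontr)
    assume "c k \<noteq> 0"
    have "?d k0 + ?d k = (\<Sum>j\<in>{k0, k}. ?d j)"
      using that by simp
    also have "\<dots> \<le> (\<Sum>j<r. ?d j)"
      by (rule sum_mono2) (use that k0 in auto)
    finally show False
      using d_pos[OF k0] d_pos[OF that(1) \<open>c k \<noteq> 0\<close>] assms(2) by linarith
  qed
  then have "(\<Sum>k<r. c k) = (\<Sum>k<r. if k = k0 then c k0 else 0)"
    by (intro sum.cong) auto
  also have "\<dots> = c k0"
    using k0(1) by (rule sum_lessThan_delta)
  finally show False
    using k0(2) assms(5) by simp
qed

lemma has_span_mono_support: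
  fixes x u :: "('a::zero) cyc"
  assumes "valid_span n s" "has_span n s x"
    and "\<forall>i\<ge>n. fst u i = 0 \<and> snd u i = 0"
    and vertex: "\<And>i. i < n \<Longrightarrow> fst x i = 0 \<Longrightarrow> fst u i = 0"
    and label: "\<And>i. i < n \<Longrightarrow> fst x i = 0 \<Longrightarrow> snd x i = 0 \<Longrightarrow> fst x (nxt n i) = 0 \<Longrightarrow>
                  snd u i = 0"
  shows "has_span n s u"
proof (cases s)
  case SEmpty
  then have "x = 0"
    using assms(2) by (simp add: has_span_SEmpty_iff)
  then have "u = 0"
    using assms(3) vertex label by (intro cyc_eqI) (auto simp: not_le[symmetric])
  then show ?thesis
    by (simp add: SEmpty has_span_SEmpty_iff)
next
  case SFull
  then show ?thesis by (simp add: has_span_SFull)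
next
  case (Sp a l)
  then have a: "a < n" "l < n"
    using assms(1) by (simp_all add: valid_span_def)
  have x_vertex: "{i. i < n \<and> fst x i \<noteq> 0} \<subseteq> halfopen_iv n a l"
    and x_label: "{i. i < n \<and> snd x i \<noteq> 0} \<subseteq> closed_iv n a l"
    using assms(2) by (simp_all add: Sp has_span_Sp_iff)
  have "snd u i = 0" if "i < n" "i \<notin> closed_iv n a l" for i
  proof (rule label[OF that(1)])
    show "fst x i = 0" "snd x i = 0"
      using x_vertex x_label that halfopen_iv_def by auto
    have "nxt n i \<notin> halfopen_iv n a l"
      using nxt_notin_halfopen_iv a that by blast
    moreover have "nxt n i < n"
      using that(1) by (simp add: nxt_def)
    ultimately show "fst x (nxt n i) = 0"
      using x_vertex by blast
  qed
  then have "{i. i < n \<and> snd u i \<noteq> 0} \<subseteq> closed_iv n a l"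
    by blast
  moreover have "{i. i < n \<and> fst u i \<noteq> 0} \<subseteq> halfopen_iv n a l"
    using x_vertex vertex by blast
  ultimately show ?thesis
    by (simp add: Sp has_span_Sp_iff)
qed

locale trellis_product_iso =
  fixes n r :: nat and T :: "('a::{field,finite}) trellis" and Ts :: "nat \<Rightarrow> 'a trellis"
    and f :: "nat \<Rightarrow> 'a vert \<Rightarrow> 'a vert"
  assumes n_pos: "n \<ge> 1"
    and linear: "linear_trellis n T"
    and linear_factors: "\<forall>k<r. linear_trellis n (Ts k)"
    and iso: "trellis_iso n T (tprod n r Ts) f"
begin

abbreviation factor :: "nat \<Rightarrow> 'a trellis" where
  "factor k \<equiv> preimg_trellis n f T (copy_k n r k (Ts k))"

lemma nxt_less_n: "nxt n i < n"
  using n_pos by (rule nxt_less)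

lemma f_bij: "i < n \<Longrightarrow> bij_betw (f i) (Vt T i) (Vt (tprod n r Ts) i)"
  using iso by (simp add: trellis_iso_def)

lemma f_edge_iff:
  "i < n \<Longrightarrow> v \<in> Vt T i \<Longrightarrow> w \<in> Vt T (nxt n i) \<Longrightarrow>
     (v, \<alpha>, w) \<in> Et T i \<longleftrightarrow> (f i v, \<alpha>, f (nxt n i) w) \<in> Et (tprod n r Ts) i"
  using iso by (simp add: trellis_iso_def)

lemma f_inj: "i < n \<Longrightarrow> v \<in> Vt T i \<Longrightarrow> w \<in> Vt T i \<Longrightarrow> f i v = f i w \<Longrightarrow> v = w"
  using f_bij by (meson bij_betw_def inj_onD)

lemma f_add: "i < n \<Longrightarrow> v \<in> Vt T i \<Longrightarrow> w \<in> Vt T i \<Longrightarrow> f i (v + w) = f i v + f i w"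
  using iso by (simp add: trellis_iso_def linear_on_def)

lemma f_zero: "i < n \<Longrightarrow> f i 0 = 0"
  using f_add[of i 0 0] vsc.subspace_0[OF subspace_Vt[OF linear]] by simp

lemma f_sum: "i < n \<Longrightarrow> (\<forall>k\<in>A. v k \<in> Vt T i) \<Longrightarrow> f i (\<Sum>k\<in>A. v k) = (\<Sum>k\<in>A. f i (v k))"
proof (induction A rule: infinite_finite_induct)
  case (insert k A)
  have "(\<Sum>j\<in>A. v j) \<in> Vt T i"
    using insert.prems by (intro vsc.subspace_sum[OF subspace_Vt[OF linear]]) auto
  then have "f i (\<Sum>j\<in>insert k A. v j) = f i (v k) + f i (\<Sum>j\<in>A. v j)"
    unfolding sum.insert[OF insert.hyps] using insert.prems by (intro f_add) auto
  also have "\<dots> = f i (v k) + (\<Sum>j\<in>A. f i (v j))"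
    using insert.IH insert.prems by simp
  also have "\<dots> = (\<Sum>j\<in>insert k A. f i (v j))"
    unfolding sum.insert[OF insert.hyps] ..
  finally show ?case .
qed (simp_all add: f_zero)

definition f_inv :: "nat \<Rightarrow> 'a vert \<Rightarrow> 'a vert" where
  "f_inv i = the_inv_into (Vt T i) (f i)"

lemma f_inv: "i < n \<Longrightarrow> y \<in> Vt (tprod n r Ts) i \<Longrightarrow> f_inv i y \<in> Vt T i \<and> f i (f_inv i y) = y"
  unfolding f_inv_def using f_bij
  by (metis bij_betw_def f_the_inv_into_f the_inv_into_into order_refl)

lemma f_inv_zero: "i < n \<Longrightarrow> f_inv i 0 = 0"
  unfolding f_inv_def using f_bij f_zero vsc.subspace_0[OF subspace_Vt[OF linear]]
  by (metis bij_betw_def the_inv_into_f_f)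

lemma inj_k_Vt: "k < r \<Longrightarrow> i < n \<Longrightarrow> b \<in> Vt (Ts k) i \<Longrightarrow> inj_k r k b \<in> Vt (tprod n r Ts) i"
  unfolding Vt_tprod inj_k_def
  using linear_factors vsc.subspace_0[OF subspace_Vt] by fastforce

lemma inj_k_Et:
  assumes "k < r" "i < n" "(b, c, d) \<in> Et (Ts k) i"
  shows "(inj_k r k b, c, inj_k r k d) \<in> Et (tprod n r Ts) i"
proof -
  let ?vs = "\<lambda>j. if j = k then b else 0" and ?\<alpha> = "\<lambda>j. if j = k then c else 0"
    and ?ws = "\<lambda>j. if j = k then d else 0"
  have "\<forall>j<r. (?vs j, ?\<alpha> j, ?ws j) \<in> Et (Ts j) i"
    using assms linear_factors zero_edge by auto
  moreover have "(\<Sum>j<r. ?\<alpha> j) = c"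
    using assms(1) by (rule sum_lessThan_delta)
  ultimately show ?thesis
    unfolding Et_tprod[OF assms(2)] inj_k_def by force
qed

lemma cycles_factor_subset: "cycles n (factor k) \<subseteq> cycles n T"
  by (auto simp: mem_cycles_iff preimg_trellis_def)

lemma factor_cycle_edge:
  assumes "k < r" "x \<in> cycles n (factor k)" "i < n"
  shows "f i (fst x i) = inj_k r k (prj k (f i (fst x i))) \<and>
         (prj k (f i (fst x i)), snd x i, prj k (f (nxt n i) (fst x (nxt n i)))) \<in> Et (Ts k) i"
proof -
  have "(f i (fst x i), snd x i, f (nxt n i) (fst x (nxt n i))) \<in> Et (copy_k n r k (Ts k)) i"
    using assms(2,3) by (auto simp: mem_cycles_iff preimg_trellis_def)
  then obtain v w where "f i (fst x i) = inj_k r k v" "f (nxt n i) (fst x (nxt n i)) = inj_k r k w"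
    "(v, snd x i, w) \<in> Et (Ts k) i"
    unfolding Et_copy_k[OF assms(3)] by auto
  then show ?thesis
    using assms(1) by simp
qed

lemma f_vertex_sum_factors:
  assumes "\<forall>k<r. u k \<in> cycles n (factor k)" "i < n"
  shows "f i (fst (\<Sum>k<r. u k) i) = enc r (\<lambda>k. prj k (f i (fst (u k) i)))"
proof -
  have "\<forall>k\<in>{..<r}. fst (u k) i \<in> Vt T i"
    using assms cycle_vertex[OF linear] cycles_factor_subset by blast
  then have "f i (fst (\<Sum>k<r. u k) i) = (\<Sum>k<r. f i (fst (u k) i))"
    using assms(2) by (simp add: fst_sum_apply f_sum)
  also have "\<dots> = (\<Sum>k<r. inj_k r k (prj k (f i (fst (u k) i))))"
    using assms factor_cycle_edge by (intro sum.cong) auto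
  finally show ?thesis
    by (simp add: sum_inj_k)
qed

lemma cycle_edge_coords:
  assumes "x \<in> cycles n T" "i < n"
  shows "\<exists>A. (\<forall>k<r. (prj k (f i (fst x i)), A k, prj k (f (nxt n i) (fst x (nxt n i)))) \<in> Et (Ts k) i)
             \<and> (\<Sum>k<r. A k) = snd x i"
proof -
  have "(fst x i, snd x i, fst x (nxt n i)) \<in> Et T i"
    using assms by (simp add: mem_cycles_iff)
  then have "(f i (fst x i), snd x i, f (nxt n i) (fst x (nxt n i))) \<in> Et (tprod n r Ts) i"
    using f_edge_iff assms cycle_vertex[OF linear] nxt_less_n by blast
  then obtain vs A ws where "f i (fst x i) = enc r vs" "snd x i = (\<Sum>k<r. A k)"
    "f (nxt n i) (fst x (nxt n i)) = enc r ws" "\<forall>k<r. (vs k, A k, ws k) \<in> Et (Ts k) i"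
    unfolding Et_tprod[OF assms(2)] by blast
  then show ?thesis
    by auto
qed

definition lift :: "nat \<Rightarrow> (nat \<Rightarrow> 'a vert) \<Rightarrow> (nat \<Rightarrow> 'a) \<Rightarrow> 'a cyc" where
  "lift k b c = (\<lambda>i. if i < n then f_inv i (inj_k r k (b i)) else 0, \<lambda>i. if i < n then c i else 0)"

context
  fixes k :: nat and b :: "nat \<Rightarrow> 'a vert" and c :: "nat \<Rightarrow> 'a"
  assumes k: "k < r" and edges: "\<forall>i<n. (b i, c i, b (nxt n i)) \<in> Et (Ts k) i"
begin

lemma lift_vertex:
  assumes "i < n"
  shows "fst (lift k b c) i \<in> Vt T i \<and> f i (fst (lift k b c) i) = inj_k r k (b i)"
proof -
  have "b i \<in> Vt (Ts k) i"
    using edges edge_endpoints linear_factors k assms by blast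
  then show ?thesis
    using f_inv[OF assms inj_k_Vt[OF k assms]] assms by (simp add: lift_def)
qed

lemma lift_in_cycles_factor: "lift k b c \<in> cycles n (factor k)"
  unfolding mem_cycles_iff
proof (intro conjI allI impI)
  fix i assume i: "i < n"
  let ?v = "fst (lift k b c) i" and ?w = "fst (lift k b c) (nxt n i)"
  have image_edge: "f i ?v = inj_k r k (b i)" "f (nxt n i) ?w = inj_k r k (b (nxt n i))"
    using lift_vertex i nxt_less_n by simp_all
  have "(f i ?v, c i, f (nxt n i) ?w) \<in> Et (tprod n r Ts) i"
    unfolding image_edge using inj_k_Et[OF k i] edges i by simp
  then have "(?v, c i, ?w) \<in> Et T i"
    using f_edge_iff[OF i] lift_vertex i nxt_less_n by simp
  moreover have "(f i ?v, c i, f (nxt n i) ?w) \<in> Et (copy_k n r k (Ts k)) i"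
    unfolding image_edge Et_copy_k[OF i] using edges i by blast
  ultimately show "(?v, snd (lift k b c) i, ?w) \<in> Et (factor k) i"
    using i by (simp add: preimg_trellis_def lift_def)
qed (simp_all add: lift_def)

end

lemma sum_lift_eq:
  assumes x: "x \<in> cycles n T"
    and edges: "\<forall>k<r. \<forall>i<n.
      (prj k (f i (fst x i)), c k i, prj k (f (nxt n i) (fst x (nxt n i)))) \<in> Et (Ts k) i"
    and labels: "\<forall>i<n. (\<Sum>k<r. c k i) = snd x i"
  shows "(\<Sum>k<r. lift k (\<lambda>i. prj k (f i (fst x i))) (c k)) = x"
    (is "(\<Sum>k<r. ?u k) = x")
proof (rule cyc_eqI)
  have u_cycle: "\<forall>k<r. ?u k \<in> cycles n (factor k)"
    using lift_in_cycles_factor edges by simp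
  fix i
  show "fst (\<Sum>k<r. ?u k) i = fst x i"
  proof (cases "i < n")
    case True
    have "f i (fst (\<Sum>k<r. ?u k) i) = enc r (\<lambda>k. prj k (f i (fst (?u k) i)))"
      using f_vertex_sum_factors[OF u_cycle True] .
    also have "\<dots> = enc r (\<lambda>k. prj k (f i (fst x i)))"
    proof (rule enc_cong)
      fix k assume "k < r"
      then show "prj k (f i (fst (?u k) i)) = prj k (f i (fst x i))"
        using lift_vertex[of k _ "c k" i] edges True by simp
    qed
    also have "\<dots> = f i (fst x i)"
      using enc_prj_Vt_tprod True bij_betw_apply[OF f_bij] cycle_vertex[OF linear x] by blast
    finally show ?thesis
      using f_inj[OF True] cycle_vertex[OF linear _ True] x u_cycle cycles_factor_subset
        csc.subspace_sum[OF subspace_cycles[OF linear], of "{..<r}" ?u]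
      by blast
  next
    case False
    then show ?thesis
      using x by (simp add: fst_sum_apply lift_def mem_cycles_iff)
  qed
  show "snd (\<Sum>k<r. ?u k) i = snd x i"
    using labels x by (cases "i < n") (simp_all add: snd_sum_apply lift_def mem_cycles_iff)
qed

context
  assumes dim_labels: "\<forall>a<n. (\<Sum>k<r. csc.dim (span_cycles n (Sp a 0) (Ts k))) \<le> 1"
begin

lemma labels_eq_0:
  "i < n \<Longrightarrow> \<forall>k<r. (0, c k, 0) \<in> Et (Ts k) i \<Longrightarrow> (\<Sum>k<r. c k) = 0 \<Longrightarrow> k < r \<Longrightarrow> c k = 0"
  using zero_vertex_edge_labels_eq_0[OF linear_factors] dim_labels by blast

lemma sum_factors_exists:
  assumes x: "x \<in> cycles n T"
  obtains u where "\<forall>k<r. u k \<in> cycles n (factor k)" "(\<Sum>k<r. u k) = x"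
    "\<And>k i. k < r \<Longrightarrow> i < n \<Longrightarrow> fst x i = 0 \<Longrightarrow> fst (u k) i = 0"
    "\<And>k i. k < r \<Longrightarrow> i < n \<Longrightarrow> fst x i = 0 \<Longrightarrow> snd x i = 0 \<Longrightarrow> fst x (nxt n i) = 0 \<Longrightarrow>
       snd (u k) i = 0"
proof -
  define b where "b k i = prj k (f i (fst x i))" for k i
  obtain A where A: "\<And>i. i < n \<Longrightarrow>
      (\<forall>k<r. (b k i, A i k, b k (nxt n i)) \<in> Et (Ts k) i) \<and> (\<Sum>k<r. A i k) = snd x i"
    using cycle_edge_coords[OF x] unfolding b_def by metis
  define u where "u k = lift k (b k) (\<lambda>i. A i k)" for k
  have u_cycle: "\<forall>k<r. u k \<in> cycles n (factor k)"
    using lift_in_cycles_factor A by (simp add: u_def)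
  have sum_u: "(\<Sum>k<r. u k) = x"
    using sum_lift_eq[OF x, of "\<lambda>k i. A i k"] A unfolding u_def b_def by blast
  have vertex_u: "fst (u k) i = 0" if "k < r" "i < n" "fst x i = 0" for k i
    using that f_zero f_inv_zero by (simp add: u_def lift_def b_def)
  have label_u: "snd (u k) i = 0"
    if "k < r" "i < n" "fst x i = 0" "snd x i = 0" "fst x (nxt n i) = 0" for k i
  proof -
    have "\<forall>j<r. (0, A i j, 0) \<in> Et (Ts j) i"
      using A[OF that(2)] that f_zero nxt_less_n by (simp add: b_def)
    then have "A i k = 0"
      using labels_eq_0[OF that(2)] A[OF that(2)] that by simp
    then show ?thesis
      using that by (simp add: u_def lift_def)
  qed
  show thesis
    by (rule that[OF u_cycle sum_u vertex_u label_u])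
qed

lemma sum_factors_unique:
  assumes u: "\<forall>k<r. u k \<in> cycles n (factor k)" and u': "\<forall>k<r. u' k \<in> cycles n (factor k)"
    and eq: "(\<Sum>k<r. u k) = (\<Sum>k<r. u' k)" and k: "k < r"
  shows "u k = u' k"
proof -
  define b where "b j i = prj j (f i (fst (u j) i))" for j i
  define b' where "b' j i = prj j (f i (fst (u' j) i))" for j i
  have b_eq: "b j i = b' j i" if "j < r" "i < n" for j i
    using f_vertex_sum_factors[OF u that(2)] f_vertex_sum_factors[OF u' that(2)] eq that(1)
    by (simp add: enc_eq_iff b_def b'_def)
  have vertex_eq: "fst (u j) i = fst (u' j) i" if "j < r" "i < n" for j i
  proof (rule f_inj[OF that(2)])
    show "fst (u j) i \<in> Vt T i" "fst (u' j) i \<in> Vt T i"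
      using u u' that cycle_vertex[OF linear] cycles_factor_subset by blast+
    show "f i (fst (u j) i) = f i (fst (u' j) i)"
      using factor_cycle_edge[OF that(1) _ that(2)] u u' b_eq[OF that] that(1)
      by (metis b_def b'_def)
  qed
  have "snd (u k) i = snd (u' k) i" if i: "i < n" for i
  proof -
    define c where "c j = snd (u j) i - snd (u' j) i" for j
    have "(0, c j, 0) \<in> Et (Ts j) i" if j: "j < r" for j
    proof -
      have "(b j i, snd (u j) i, b j (nxt n i)) \<in> Et (Ts j) i"
        "(b' j i, snd (u' j) i, b' j (nxt n i)) \<in> Et (Ts j) i"
        using factor_cycle_edge[OF j _ i] u u' j by (simp_all add: b_def b'_def)
      then have "(b j i, snd (u j) i, b j (nxt n i)) - (b' j i, snd (u' j) i, b' j (nxt n i))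
          \<in> Et (Ts j) i"
        using esc.subspace_diff[OF subspace_Et] linear_factors j i by blast
      then show ?thesis
        using b_eq[OF j i] b_eq[OF j nxt_less_n] by (simp add: c_def)
    qed
    moreover have "(\<Sum>j<r. c j) = 0"
      using eq by (simp add: c_def sum_subtractf flip: snd_sum_apply)
    ultimately show ?thesis
      using labels_eq_0[OF i, of c k] k by (simp add: c_def)
  qed
  moreover have "fst (u k) i = 0 \<and> fst (u' k) i = 0 \<and> snd (u k) i = 0 \<and> snd (u' k) i = 0"
    if "i \<ge> n" for i
    using u u' k that cycles_factor_subset by (auto simp: mem_cycles_iff)
  ultimately show ?thesis
    using vertex_eq[OF k] by (intro cyc_eqI) (metis not_le)+
qed

theorem direct_sum_span_cycles_factors:
  assumes "valid_span n s"
  shows "direct_sum (span_cycles n s T) (\<lambda>k. span_cycles n s (factor k)) r"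
  unfolding direct_sum_def
proof (intro conjI allI impI)
  show "span_cycles n s T = {\<Sum>k<r. u k | u. \<forall>k<r. u k \<in> span_cycles n s (factor k)}"
  proof (intro equalityI subsetI)
    fix x assume "x \<in> span_cycles n s T"
    then have x: "x \<in> cycles n T" "has_span n s x"
      by (simp_all add: span_cycles_def)
    obtain u where u: "\<forall>k<r. u k \<in> cycles n (factor k)" "(\<Sum>k<r. u k) = x"
      "\<And>k i. k < r \<Longrightarrow> i < n \<Longrightarrow> fst x i = 0 \<Longrightarrow> fst (u k) i = 0"
      "\<And>k i. k < r \<Longrightarrow> i < n \<Longrightarrow> fst x i = 0 \<Longrightarrow> snd x i = 0 \<Longrightarrow> fst x (nxt n i) = 0 \<Longrightarrow>
         snd (u k) i = 0"
      using sum_factors_exists[OF x(1)] by blast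
    have "has_span n s (u k)" if "k < r" for k
    proof (rule has_span_mono_support[OF assms x(2)])
      show "\<forall>i\<ge>n. fst (u k) i = 0 \<and> snd (u k) i = 0"
        using u(1) that by (simp add: mem_cycles_iff preimg_trellis_def)
    qed (use u(3,4) that in auto)
    then show "x \<in> {\<Sum>k<r. u k | u. \<forall>k<r. u k \<in> span_cycles n s (factor k)}"
      using u(1,2) by (auto simp: span_cycles_def)
  next
    fix x assume "x \<in> {\<Sum>k<r. u k | u. \<forall>k<r. u k \<in> span_cycles n s (factor k)}"
    then obtain u where x: "x = (\<Sum>k<r. u k)" and u: "\<forall>k<r. u k \<in> span_cycles n s (factor k)"
      by blast
    have "\<forall>k<r. u k \<in> span_cycles n s T"
      using u cycles_factor_subset by (auto simp: span_cycles_def)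
    then show "x \<in> span_cycles n s T"
      unfolding x by (intro csc.subspace_sum[OF subspace_span_cycles[OF linear]]) auto
  qed
qed (use sum_factors_unique in \<open>auto simp: span_cycles_def\<close>)

end

end

theorem mainTheorem4:
  fixes n :: nat and T :: "('a::{field,finite}) trellis"
  assumes "n \<ge> 1"
    and "linear_trellis n T"
    and "reduced n T"
  shows
   "(\<forall>(r::nat) (S :: nat \<Rightarrow> 'a cyc set).
       (\<forall>k<r. S k \<subseteq> cycles n T \<and> module.subspace csc (S k)) \<and>
       (\<forall>s. valid_span n s \<longrightarrow>
            direct_sum (span_cycles n s T) (\<lambda>k. S k \<inter> span_cycles n s T) r)
       \<longrightarrow>
       (\<forall>k<r. S k = cycles n (sub_trellis n (S k))) \<and>
       (\<exists>f. trellis_iso n T (tprod n r (\<lambda>k. sub_trellis n (S k))) f \<and>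
            (\<forall>k<r. img_trellis n f (sub_trellis n (S k)) =
                    copy_k n r k (sub_trellis n (S k))))) \<and>
    (\<forall>(r::nat) (Ts :: nat \<Rightarrow> 'a trellis) f.
       (\<forall>k<r. linear_trellis n (Ts k)) \<and>
       (\<forall>a<n. (\<Sum>k<r. vector_space.dim csc (span_cycles n (Sp a 0) (Ts k))) \<le> 1) \<and>
       trellis_iso n T (tprod n r Ts) f
       \<longrightarrow>
       (\<forall>s. valid_span n s \<longrightarrow>
            direct_sum (span_cycles n s T)
              (\<lambda>k. span_cycles n s (preimg_trellis n f T (copy_k n r k (Ts k)))) r))"
proof (rule conjI; intro allI impI)
  fix r :: nat and S :: "nat \<Rightarrow> 'a cyc set"
  assume "(\<forall>k<r. S k \<subseteq> cycles n T \<and> csc.subspace (S k)) \<and>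
    (\<forall>s. valid_span n s \<longrightarrow> direct_sum (span_cycles n s T) (\<lambda>k. S k \<inter> span_cycles n s T) r)"
  with assms interpret cycle_decomposition n r T S
    by unfold_locales blast+
  show "(\<forall>k<r. S k = cycles n (sub_trellis n (S k))) \<and>
    (\<exists>f. trellis_iso n T (tprod n r (\<lambda>k. sub_trellis n (S k))) f \<and>
      (\<forall>k<r. img_trellis n f (sub_trellis n (S k)) = copy_k n r k (sub_trellis n (S k))))"
    using S_eq_cycles_sub_trellis trellis_iso_split_vertex img_sub_trellis_split_vertex by blast
next
  fix r :: nat and Ts :: "nat \<Rightarrow> 'a trellis" and f s
  assume h: "(\<forall>k<r. linear_trellis n (Ts k)) \<and>
    (\<forall>a<n. (\<Sum>k<r. csc.dim (span_cycles n (Sp a 0) (Ts k))) \<le> 1) \<and>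
    trellis_iso n T (tprod n r Ts) f"
    and "valid_span n s"
  from h assms interpret trellis_product_iso n r T Ts f
    by unfold_locales blast+
  show "direct_sum (span_cycles n s T) (\<lambda>k. span_cycles n s (factor k)) r"
    using direct_sum_span_cycles_factors h \<open>valid_span n s\<close> by blast
qed

end
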